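(* Let $U$ be Haar distributed on $\mathbb U(n)$, $n\ge 2$, and for $1\le p,q\le n$ let $T_{p,q}=\sum_{i\le p,\,j\le q}|U_{ij}|^2$. For all $1\le p,p',q,q'\le n$, $$\operatorname{Cov}(T_{p,q},T_{p',q'})=\frac{(p\wedge p')(q\wedge q')}{n^2-1}-\frac{(p\wedge p')\,qq'}{n(n^2-1)}-\frac{pp'\,(q\wedge q')}{n(n^2-1)}+\frac{pp'qq'}{n^2(n^2-1)}.$$ In particular, if $p/n\to s$, $q/n\to t$, $p'/n\to s'$, $q'/n\to t'$, then $\operatorname{Cov}(T_{p,q},T_{p',q'})\to(s\wedge s'-ss')(t\wedge t'-tt')$. *)

theory Defs
  imports "HOL-Probability.Probability"
begin

text \<open>Matrices in M_n(C) are complex^'n^'n; the dimension is n = CARD('n).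
  The index type is linearly ordered so that "the first p rows" makes sense.\<close>

definition conj_transpose :: "complex^'n^'m \<Rightarrow> complex^'m^'n" where
  "conj_transpose U = (\<chi> i j. cnj (U $ j $ i))"

definition unitary_mat :: "complex^'n^'n \<Rightarrow> bool" where
  "unitary_mat U \<longleftrightarrow> U ** conj_transpose U = mat 1 \<and> conj_transpose U ** U = mat 1"

text \<open>Haar (probability) measure on the compact group U(n), viewed as a Borel
  probability measure on complex n x n matrices concentrated on U(n) and invariant
  under left multiplication by unitary matrices (unique such measure).\<close>
definition haar_unitary :: "(complex^'n^'n) measure \<Rightarrow> bool" where
  "haar_unitary M \<longleftrightarrow> prob_space M \<and> sets M = sets borel \<and>
     (AE U in M. unitary_mat U) \<and>
     (\<forall>V. unitary_mat V \<longrightarrow> distr M M (\<lambda>U. V ** U) = M)"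

text \<open>0-based position of an index in the linear order of the finite index type.\<close>
definition idx :: "'n::{finite,linorder} \<Rightarrow> nat" where
  "idx i = card {j. j < i}"

text \<open>T_{p,q}(U) = sum over i <= p, j <= q of |U_ij|^2 (1-based), i.e. the first p rows
  and first q columns.\<close>
definition T_block :: "nat \<Rightarrow> nat \<Rightarrow> complex^('n::{finite,linorder})^('n::{finite,linorder}) \<Rightarrow> real" where
  "T_block p q U = (\<Sum>i\<in>{i. idx i < p}. \<Sum>j\<in>{j. idx j < q}. (cmod (U $ i $ j))\<^sup>2)"

definition covariance :: "'a measure \<Rightarrow> ('a \<Rightarrow> real) \<Rightarrow> ('a \<Rightarrow> real) \<Rightarrow> real" where
  "covariance M X Y =
     integral\<^sup>L M (\<lambda>x. (X x - integral\<^sup>L M X) * (Y x - integral\<^sup>L M Y))"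

definition cov_formula :: "nat \<Rightarrow> nat \<Rightarrow> nat \<Rightarrow> nat \<Rightarrow> nat \<Rightarrow> real" where
  "cov_formula n p q p' q' =
     real (min p p') * real (min q q') / (real n ^ 2 - 1)
     - real (min p p') * real q * real q' / (real n * (real n ^ 2 - 1))
     - real p * real p' * real (min q q') / (real n * (real n ^ 2 - 1))
     + real p * real p' * real q * real q' / (real n ^ 2 * (real n ^ 2 - 1))"

end

theory Submission
  imports Defs "HOL-Real_Asymp.Real_Asymp"
begin

(*
  The only property of Haar measure used is invariance under left multiplication by the
  unitary "row mixing" matrices, which replace rows i and k of U by (row_i + w row_k)/sqrt 2
  and (- cnj w row_i + row_k)/sqrt 2.  Averaging this invariance over the four phases
  w = 1, -1, i, -i turns it into linear relations between the second moments E|U_ij|^2, the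
  fourth moments E |U_ij|^2 |U_kl|^2 and an auxiliary cross moment.  Together with the
  orthonormality of the columns of U these relations determine
     E |U_ij|^2 = 1/n,
     E |U_ij|^2 |U_kl|^2 = (1 + [i=k][j=l]) / (n^2-1) - ([i=k] + [j=l]) / (n (n^2-1)).
  Expanding E T_{p,q} T_{p',q'} into a quadruple sum of fourth moments and counting the
  coincidences i = k and j = l gives the covariance formula; it factors as
     (min p p' - p p'/n) (min q q' - q q'/n) / (n^2 - 1),
  from which the limit (min s s' - s s') (min t t' - t t') is immediate.
*)

section \<open>Unitary matrices\<close>

lemma conj_transpose_mult: "conj_transpose (A ** B) = conj_transpose B ** conj_transpose A"
  by (simp add: conj_transpose_def matrix_matrix_mult_def vec_eq_iff mult.commute)

(* For square matrices a one-sided inverse is two-sided, so one equation suffices. *)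
lemma unitary_matI:
  fixes V :: "complex^'n^'n"
  assumes "V ** conj_transpose V = mat 1"
  shows "unitary_mat V"
  using assms matrix_left_right_inverse unfolding unitary_mat_def by blast

lemma unitary_mat_mult:
  assumes "unitary_mat A" "unitary_mat B"
  shows "unitary_mat (A ** B)"
proof (rule unitary_matI)
  have "A ** B ** conj_transpose (A ** B) = A ** (B ** conj_transpose B) ** conj_transpose A"
    by (simp add: conj_transpose_mult matrix_mul_assoc)
  also have "\<dots> = mat 1" using assms by (simp add: unitary_mat_def)
  finally show "A ** B ** conj_transpose (A ** B) = mat 1" .
qed

lemma unitary_columns_orthonormal:
  assumes "unitary_mat U"
  shows "(\<Sum>i\<in>UNIV. cnj (U $ i $ j) * U $ i $ l) = of_bool (j = l)"
proof -
  have "(conj_transpose U ** U) $ j $ l = of_bool (j = l)"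
    using assms by (simp add: unitary_mat_def mat_def)
  thus ?thesis by (simp add: conj_transpose_def matrix_matrix_mult_def)
qed

lemma unitary_column_norm:
  assumes "unitary_mat U"
  shows "(\<Sum>i\<in>UNIV. (cmod (U $ i $ j))\<^sup>2) = 1"
proof -
  have "complex_of_real (\<Sum>i\<in>UNIV. (cmod (U $ i $ j))\<^sup>2) = (\<Sum>i\<in>UNIV. cnj (U $ i $ j) * U $ i $ j)"
    by (simp only: of_real_sum complex_norm_square mult.commute)
  also have "\<dots> = 1" using unitary_columns_orthonormal[OF assms, of j j] by simp
  finally show ?thesis by (metis of_real_eq_1_iff)
qed

lemma unitary_entry_bound:
  assumes "unitary_mat U"
  shows "cmod (U $ i $ j) \<le> 1"
proof -
  have "(cmod (U $ i $ j))\<^sup>2 \<le> (\<Sum>i\<in>UNIV. (cmod (U $ i $ j))\<^sup>2)"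
    by (rule member_le_sum) auto
  hence "(cmod (U $ i $ j))\<^sup>2 \<le> 1" using unitary_column_norm[OF assms] by simp
  thus ?thesis by (simp add: power_le_one_iff abs_le_square_iff)
qed

section \<open>Row mixing matrices\<close>

definition sqrt2 :: complex where "sqrt2 = complex_of_real (sqrt 2)"

lemma sqrt2_square: "sqrt2 * sqrt2 = 2"
  by (simp add: sqrt2_def flip: of_real_mult)

lemma sqrt2_nonzero [simp]: "sqrt2 \<noteq> 0"
  by (simp add: sqrt2_def)

lemma cnj_sqrt2 [simp]: "cnj sqrt2 = sqrt2"
  by (simp add: sqrt2_def)

(* Rows i and k of U are transformed by the 2x2 matrix [[1, w], [-cnj w, 1]] / sqrt 2,
   which is unitary when |w| = 1; all other rows are kept. *)
definition row_mix :: "'n \<Rightarrow> 'n \<Rightarrow> complex \<Rightarrow> complex^'m^'n \<Rightarrow> complex^'m^'n" where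
  "row_mix i k w U = (\<chi> r s. if r = i then (U$i$s + w * U$k$s) / sqrt2
     else if r = k then (- cnj w * U$i$s + U$k$s) / sqrt2 else U$r$s)"

lemma row_mix_first_row: "row_mix i k w U $ i $ s = (U$i$s + w * U$k$s) / sqrt2"
  by (simp add: row_mix_def)

lemma row_mix_other_row: "r \<noteq> i \<Longrightarrow> r \<noteq> k \<Longrightarrow> row_mix i k w U $ r $ s = U$r$s"
  by (simp add: row_mix_def)

lemma row_mix_eq_mult:
  fixes U :: "complex^'m^'n::finite"
  shows "row_mix i k w U = row_mix i k w (mat 1) ** U"
  by (auto simp: vec_eq_iff matrix_matrix_mult_def row_mix_def mat_def ring_distribs sum.distrib
      sum_subtractf mult.assoc sum_distrib_left[symmetric] if_distrib[where f="\<lambda>x. x * _"]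
      if_distrib[where f="\<lambda>x. x / _"] sum_divide_distrib[symmetric] cong: if_cong)

lemma row_mix_unitary:
  assumes "i \<noteq> k" "w * cnj w = 1"
  shows "unitary_mat (row_mix i k w (mat 1) :: complex^'n::finite^'n)"
proof (rule unitary_matI)
  let ?V = "row_mix i k w (mat 1) :: complex^'n^'n"
  have "?V ** conj_transpose ?V = row_mix i k w (conj_transpose ?V)"
    by (rule row_mix_eq_mult[symmetric])
  also have "\<dots> = mat 1"
  proof -
    have w: "cnj w * w = 1" using assms(2) by (simp add: mult.commute)
    have h: "1/sqrt2 + 1/sqrt2 = sqrt2" by (simp add: field_simps sqrt2_square)
    have "row_mix i k w (conj_transpose ?V) $ r $ s = mat 1 $ r $ s" for r s
      using assms(1)
      by (cases "r = i"; cases "r = k"; cases "s = i"; cases "s = k";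
          simp add: row_mix_def conj_transpose_def mat_def assms(2) w h)
    thus ?thesis by (simp add: vec_eq_iff)
  qed
  finally show "?V ** conj_transpose ?V = mat 1" .
qed

lemma row_mix_unitary_mat:
  assumes "i \<noteq> k" "w * cnj w = 1" "unitary_mat U"
  shows "unitary_mat (row_mix i k w U)"
  using unitary_mat_mult[OF row_mix_unitary[OF assms(1,2)] assms(3)] by (simp flip: row_mix_eq_mult)

lemma row_mix_continuous: "continuous_on UNIV (row_mix i k w :: complex^'m^'n \<Rightarrow> _)"
  unfolding row_mix_def
proof (intro continuous_on_vec_lambda)
  fix r s
  show "continuous_on UNIV (\<lambda>U::complex^'m^'n. if r = i then (U$i$s + w * U$k$s) / sqrt2
     else if r = k then (- cnj w * U$i$s + U$k$s) / sqrt2 else U$r$s)"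
    by (cases "r = i"; cases "r = k") (auto intro!: continuous_intros)
qed

section \<open>Averaging over the four phases 1, -1, i, -i\<close>

definition phase_sum :: "(complex \<Rightarrow> real) \<Rightarrow> real" where
  "phase_sum g = g 1 + g (-1) + g \<i> + g (-\<i>)"

lemma phase_sum_mult_right: "phase_sum (\<lambda>w. g w * c) = phase_sum g * c"
  by (simp add: phase_sum_def algebra_simps)

lemma cmod_div_sqrt2_square: "(cmod (z / sqrt2))\<^sup>2 = (cmod z)\<^sup>2 / 2"
  by (simp add: norm_divide sqrt2_def power_divide)

lemma phase_sum_square:
  "phase_sum (\<lambda>w. (cmod ((a + w * b) / sqrt2))\<^sup>2) = 2 * ((cmod a)\<^sup>2 + (cmod b)\<^sup>2)"
  unfolding phase_sum_def cmod_div_sqrt2_square unfolding cmod_power2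
  by (simp add: power2_eq_square field_simps)

lemma phase_sum_product:
  "phase_sum (\<lambda>w. (cmod ((a + w * b) / sqrt2))\<^sup>2 * (cmod ((c + w * d) / sqrt2))\<^sup>2)
   = ((cmod a)\<^sup>2 + (cmod b)\<^sup>2) * ((cmod c)\<^sup>2 + (cmod d)\<^sup>2) + 2 * Re (a * cnj b * cnj c * d)"
  unfolding phase_sum_def cmod_div_sqrt2_square unfolding cmod_power2
  by (simp add: power2_eq_square field_simps)

section \<open>Moments of a Haar unitary matrix\<close>

locale haar_space =
  fixes M :: "(complex^'n::finite^'n) measure"
  assumes haar: "haar_unitary M"
begin

lemma prob_space_M: "prob_space M"
  using haar by (simp add: haar_unitary_def)

lemma sets_M: "sets M = sets borel"
  using haar by (simp add: haar_unitary_def)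

lemma AE_unitary: "AE U in M. unitary_mat U"
  using haar by (simp add: haar_unitary_def)

lemma continuous_measurable:
  "continuous_on UNIV f \<Longrightarrow> f \<in> borel_measurable M"
  using borel_measurable_continuous_onI measurable_cong_sets[OF sets_M refl] by blast

lemma integrable_bounded_on_unitary:
  assumes "continuous_on UNIV f" "\<And>U. unitary_mat U \<Longrightarrow> \<bar>f U\<bar> \<le> B"
  shows "integrable M (f :: _ \<Rightarrow> real)"
proof -
  interpret prob_space M by (rule prob_space_M)
  show ?thesis
  proof (rule integrable_const_bound[where B=B])
    show "AE x in M. norm (f x) \<le> B"
      using AE_unitary by eventually_elim (simp add: assms(2))
  qed (rule continuous_measurable[OF assms(1)])
qed

lemma integral_eq_on_unitary:
  assumes "continuous_on UNIV f" "continuous_on UNIV g" "\<And>U. unitary_mat U \<Longrightarrow> f U = g U"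
  shows "integral\<^sup>L M f = integral\<^sup>L M (g :: _ \<Rightarrow> real)"
proof (rule integral_cong_AE)
  show "AE x in M. f x = g x" using AE_unitary by eventually_elim (rule assms(3))
qed (use assms(1,2) continuous_measurable in auto)

lemma integral_row_mix:
  assumes "i \<noteq> k" "w * cnj w = 1" "continuous_on UNIV f"
  shows "integral\<^sup>L M (f :: _ \<Rightarrow> real) = integral\<^sup>L M (\<lambda>U. f (row_mix i k w U))"
proof -
  have "distr M M (\<lambda>U. row_mix i k w (mat 1) ** U) = M"
    using haar row_mix_unitary[OF assms(1,2)] unfolding haar_unitary_def by blast
  hence distr: "distr M M (row_mix i k w) = M"
    by (simp flip: row_mix_eq_mult)
  have "row_mix i k w \<in> measurable M M"
    using measurable_cong_sets[OF sets_M sets_M]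
      borel_measurable_continuous_onI[OF row_mix_continuous] by blast
  hence "integral\<^sup>L (distr M M (row_mix i k w)) f = integral\<^sup>L M (\<lambda>U. f (row_mix i k w U))"
    by (rule integral_distr) (rule continuous_measurable[OF assms(3)])
  thus ?thesis by (simp only: distr)
qed

lemma integral_phase_average:
  assumes "i \<noteq> k" "continuous_on UNIV f" "\<And>U. unitary_mat U \<Longrightarrow> \<bar>f U\<bar> \<le> B"
  shows "4 * integral\<^sup>L M f = integral\<^sup>L M (\<lambda>U. phase_sum (\<lambda>w. f (row_mix i k w U)))"
proof -
  have phases: "(1::complex) * cnj 1 = 1" "(-1::complex) * cnj (-1) = 1"
      "\<i> * cnj \<i> = 1" "(-\<i>) * cnj (-\<i>) = 1"
    by simp_all
  have integrable: "integrable M (\<lambda>U. f (row_mix i k w U))" if "w * cnj w = 1" for w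
    by (rule integrable_bounded_on_unitary[where B=B])
      (auto intro: continuous_on_compose2[OF assms(2) row_mix_continuous]
        assms(3) row_mix_unitary_mat[OF assms(1) that])
  note invariant = integral_row_mix[OF assms(1) _ assms(2)]
  show ?thesis
    unfolding phase_sum_def
    using invariant[OF phases(1)] invariant[OF phases(2)] invariant[OF phases(3)]
      invariant[OF phases(4)] integrable[OF phases(1)] integrable[OF phases(2)]
      integrable[OF phases(3)] integrable[OF phases(4)]
    by simp
qed

(* The moments: squared moduli of one entry, products for two entries, and the interference
   term produced by phase averaging. *)
definition mom2 :: "'n \<Rightarrow> 'n \<Rightarrow> real" where
  "mom2 i j = integral\<^sup>L M (\<lambda>U. (cmod (U$i$j))\<^sup>2)"

definition mom4 :: "'n \<Rightarrow> 'n \<Rightarrow> 'n \<Rightarrow> 'n \<Rightarrow> real" where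
  "mom4 i j k l = integral\<^sup>L M (\<lambda>U. (cmod (U$i$j))\<^sup>2 * (cmod (U$k$l))\<^sup>2)"

definition cross4 :: "'n \<Rightarrow> 'n \<Rightarrow> 'n \<Rightarrow> 'n \<Rightarrow> real" where
  "cross4 i j k l = integral\<^sup>L M (\<lambda>U. Re (U$i$j * cnj (U$k$j) * cnj (U$i$l) * U$k$l))"

lemma bound_mom2: "unitary_mat U \<Longrightarrow> \<bar>(cmod (U$i$j))\<^sup>2\<bar> \<le> 1"
  using unitary_entry_bound[of U i j] by (simp add: power_le_one)

lemma bound_mom4: "unitary_mat U \<Longrightarrow> \<bar>(cmod (U$i$j))\<^sup>2 * (cmod (U$k$l))\<^sup>2\<bar> \<le> 1"
  using unitary_entry_bound[of U i j] unitary_entry_bound[of U k l]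
  by (simp add: power_le_one mult_le_one)

lemma bound_cross4:
  assumes "unitary_mat U"
  shows "\<bar>Re (U$i$j * cnj (U$k$j) * cnj (U$i$l) * U$k$l)\<bar> \<le> 1"
proof -
  have "\<bar>Re (U$i$j * cnj (U$k$j) * cnj (U$i$l) * U$k$l)\<bar> \<le> cmod (U$i$j * cnj (U$k$j) * cnj (U$i$l) * U$k$l)"
    by (rule abs_Re_le_cmod)
  also have "\<dots> = cmod (U$i$j) * cmod (U$k$j) * cmod (U$i$l) * cmod (U$k$l)"
    by (simp add: norm_mult)
  also have "\<dots> \<le> 1"
    using assms by (simp add: mult_le_one unitary_entry_bound)
  finally show ?thesis .
qed

lemma integrable_mom2 [simp]: "integrable M (\<lambda>U. (cmod (U$i$j))\<^sup>2)"
  by (rule integrable_bounded_on_unitary[OF _ bound_mom2]) (intro continuous_intros)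

lemma integrable_mom4 [simp]: "integrable M (\<lambda>U. (cmod (U$i$j))\<^sup>2 * (cmod (U$k$l))\<^sup>2)"
  by (rule integrable_bounded_on_unitary[OF _ bound_mom4]) (intro continuous_intros)

lemma integrable_cross4 [simp]: "integrable M (\<lambda>U. Re (U$i$j * cnj (U$k$j) * cnj (U$i$l) * U$k$l))"
  by (rule integrable_bounded_on_unitary[OF _ bound_cross4]) (intro continuous_intros)

lemma mom2_row_indep:
  assumes "i \<noteq> k"
  shows "mom2 i j = mom2 k j"
proof -
  have "4 * mom2 i j = integral\<^sup>L M (\<lambda>U. phase_sum (\<lambda>w. (cmod (row_mix i k w U $ i $ j))\<^sup>2))"
    unfolding mom2_def
    by (rule integral_phase_average[OF assms _ bound_mom2]) (intro continuous_intros)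
  also have "\<dots> = integral\<^sup>L M (\<lambda>U. 2 * ((cmod (U$i$j))\<^sup>2 + (cmod (U$k$j))\<^sup>2))"
    by (simp only: row_mix_first_row phase_sum_square)
  also have "\<dots> = 2 * mom2 i j + 2 * mom2 k j"
    by (simp add: mom2_def)
  finally show ?thesis by simp
qed

lemma mom4_same_row_relation:
  assumes "i \<noteq> k"
  shows "4 * mom4 i j i l = mom4 i j i l + mom4 i j k l + mom4 k j i l + mom4 k j k l + 2 * cross4 i j k l"
proof -
  have "4 * mom4 i j i l = integral\<^sup>L M (\<lambda>U. phase_sum (\<lambda>w.
      (cmod (row_mix i k w U $ i $ j))\<^sup>2 * (cmod (row_mix i k w U $ i $ l))\<^sup>2))"
    unfolding mom4_def
    by (rule integral_phase_average[OF assms _ bound_mom4]) (intro continuous_intros)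
  also have "\<dots> = integral\<^sup>L M (\<lambda>U. ((cmod (U$i$j))\<^sup>2 + (cmod (U$k$j))\<^sup>2) * ((cmod (U$i$l))\<^sup>2 + (cmod (U$k$l))\<^sup>2)
      + 2 * Re (U$i$j * cnj (U$k$j) * cnj (U$i$l) * U$k$l))"
    by (simp only: row_mix_first_row phase_sum_product)
  also have "\<dots> = integral\<^sup>L M (\<lambda>U. (cmod (U$i$j))\<^sup>2 * (cmod (U$i$l))\<^sup>2 + (cmod (U$i$j))\<^sup>2 * (cmod (U$k$l))\<^sup>2
      + (cmod (U$k$j))\<^sup>2 * (cmod (U$i$l))\<^sup>2 + (cmod (U$k$j))\<^sup>2 * (cmod (U$k$l))\<^sup>2
      + 2 * Re (U$i$j * cnj (U$k$j) * cnj (U$i$l) * U$k$l))"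
    by (simp add: algebra_simps)
  also have "\<dots> = mom4 i j i l + mom4 i j k l + mom4 k j i l + mom4 k j k l + 2 * cross4 i j k l"
    by (simp only: mom4_def cross4_def Bochner_Integration.integral_add integral_mult_right_zero
        integrable_mom4 integrable_cross4 Bochner_Integration.integrable_add integrable_mult_right)
  finally show ?thesis .
qed

lemma mom4_row_indep:
  assumes "i \<noteq> k" "m \<noteq> i" "m \<noteq> k"
  shows "mom4 i j m l = mom4 k j m l"
proof -
  have "4 * mom4 i j m l = integral\<^sup>L M (\<lambda>U. phase_sum (\<lambda>w.
      (cmod (row_mix i k w U $ i $ j))\<^sup>2 * (cmod (row_mix i k w U $ m $ l))\<^sup>2))"
    unfolding mom4_def
    by (rule integral_phase_average[OF assms(1) _ bound_mom4]) (intro continuous_intros)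
  also have "\<dots> = integral\<^sup>L M (\<lambda>U. 2 * ((cmod (U$i$j))\<^sup>2 + (cmod (U$k$j))\<^sup>2) * (cmod (U$m$l))\<^sup>2)"
    by (simp only: row_mix_first_row row_mix_other_row[OF assms(2,3)]
        phase_sum_mult_right phase_sum_square)
  also have "\<dots> = 2 * mom4 i j m l + 2 * mom4 k j m l"
    by (simp add: mom4_def algebra_simps)
  finally show ?thesis by simp
qed

lemma mom4_swap: "mom4 k l i j = mom4 i j k l"
  unfolding mom4_def by (simp only: mult.commute)

lemma cross4_swap: "cross4 k j i l = cross4 i j k l"
  unfolding cross4_def by (simp add: algebra_simps)

lemma cross4_same_row: "cross4 i j i l = mom4 i j i l"
  unfolding cross4_def mom4_def cmod_power2 by (simp add: algebra_simps power2_eq_square)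

lemma cross4_same_column: "cross4 i j k j = mom4 i j k j"
  unfolding cross4_def mom4_def cmod_power2 by (simp add: algebra_simps power2_eq_square)

lemma mom2_column_sum: "(\<Sum>i\<in>UNIV. mom2 i j) = 1"
proof -
  interpret prob_space M by (rule prob_space_M)
  have "(\<Sum>i\<in>UNIV. mom2 i j) = integral\<^sup>L M (\<lambda>U. \<Sum>i\<in>UNIV. (cmod (U$i$j))\<^sup>2)"
    by (simp add: mom2_def)
  also have "\<dots> = integral\<^sup>L M (\<lambda>U. 1)"
    by (rule integral_eq_on_unitary) (auto intro!: continuous_intros simp: unitary_column_norm)
  finally show ?thesis by (simp add: prob_space)
qed

lemma mom4_column_sum: "(\<Sum>i\<in>UNIV. mom4 i j k l) = mom2 k l"
proof -
  have "(\<Sum>i\<in>UNIV. mom4 i j k l) = integral\<^sup>L M (\<lambda>U. \<Sum>i\<in>UNIV. (cmod (U$i$j))\<^sup>2 * (cmod (U$k$l))\<^sup>2)"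
    by (simp add: mom4_def)
  also have "\<dots> = mom2 k l"
    unfolding mom2_def
    by (rule integral_eq_on_unitary)
      (auto intro!: continuous_intros simp: unitary_column_norm simp flip: sum_distrib_right)
  finally show ?thesis .
qed

(* Summed over both rows, the interference terms give |<col_j, col_l>|^2. *)
lemma cross4_double_sum: "(\<Sum>i\<in>UNIV. \<Sum>k\<in>UNIV. cross4 i j k l) = of_bool (j = l)"
proof -
  have row_sum: "integral\<^sup>L M (\<lambda>U. \<Sum>k\<in>UNIV. Re (U$i$j * cnj (U$k$j) * cnj (U$i$l) * U$k$l))
      = (\<Sum>k\<in>UNIV. cross4 i j k l)" for i
    unfolding cross4_def by (rule Bochner_Integration.integral_sum) (rule integrable_cross4)
  have "integral\<^sup>L M (\<lambda>U. \<Sum>i\<in>UNIV. \<Sum>k\<in>UNIV. Re (U$i$j * cnj (U$k$j) * cnj (U$i$l) * U$k$l))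
      = (\<Sum>i\<in>UNIV. integral\<^sup>L M (\<lambda>U. \<Sum>k\<in>UNIV. Re (U$i$j * cnj (U$k$j) * cnj (U$i$l) * U$k$l)))"
    by (rule Bochner_Integration.integral_sum) (intro Bochner_Integration.integrable_sum integrable_cross4)
  hence "(\<Sum>i\<in>UNIV. \<Sum>k\<in>UNIV. cross4 i j k l)
      = integral\<^sup>L M (\<lambda>U. \<Sum>i\<in>UNIV. \<Sum>k\<in>UNIV. Re (U$i$j * cnj (U$k$j) * cnj (U$i$l) * U$k$l))"
    by (simp only: row_sum)
  also have "\<dots> = integral\<^sup>L M (\<lambda>U. of_bool (j = l))"
  proof (rule integral_eq_on_unitary)
    fix U :: "complex^'n^'n"
    assume U: "unitary_mat U"
    have "(\<Sum>i\<in>UNIV. \<Sum>k\<in>UNIV. Re (U$i$j * cnj (U$k$j) * cnj (U$i$l) * U$k$l))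
        = Re (cnj (\<Sum>i\<in>UNIV. cnj (U$i$j) * U$i$l) * (\<Sum>k\<in>UNIV. cnj (U$k$j) * U$k$l))"
      by (simp add: sum_product Re_sum algebra_simps)
    also have "\<dots> = of_bool (j = l)"
      by (simp add: unitary_columns_orthonormal[OF U])
    finally show "(\<Sum>i\<in>UNIV. \<Sum>k\<in>UNIV. Re (U$i$j * cnj (U$k$j) * cnj (U$i$l) * U$k$l)) = of_bool (j = l)" .
  qed (auto intro!: continuous_intros)
  also have "\<dots> = of_bool (j = l)"
    using prob_space_M by (simp add: prob_space.prob_space)
  finally show ?thesis .
qed

(* By row independence the n equal second moments of a column sum to 1. *)
lemma mom2_value: "mom2 i j = 1 / real CARD('n)"
proof -
  have "(\<Sum>x\<in>UNIV. mom2 x j) = (\<Sum>x\<in>(UNIV::'n set). mom2 i j)"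
    by (intro sum.cong refl) (metis mom2_row_indep)
  hence "real CARD('n) * mom2 i j = 1"
    using mom2_column_sum[of j] by simp
  thus ?thesis by (simp add: field_simps)
qed

(* Comparing mom4_same_row_relation for (i, k) and (k, i). *)
lemma mom4_same_row_indep: "mom4 i j i l = mom4 k j k l"
proof (cases "i = k")
  case False
  show ?thesis
    using mom4_same_row_relation[OF False, of j l] mom4_same_row_relation[of k i j l]
      cross4_swap[of k j i l] False
    by simp
qed simp

(* The relation of mom4_same_row_relation for an arbitrary pair of rows a, b; for a = b it
   is the identity cross4_same_row. *)
lemma mom4_pair_relation:
  "mom4 a j b l + mom4 b j a l + 2 * cross4 a j b l = 2 * mom4 i j i l * (1 + of_bool (a = b))"
proof (cases "a = b")
  case True
  thus ?thesis using cross4_same_row[of b j l] mom4_same_row_indep[of b j l i] by simp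
next
  case False
  thus ?thesis
    using mom4_same_row_relation[OF False, of j l] mom4_same_row_indep[of a j l i]
      mom4_same_row_indep[of b j l i]
    by simp
qed

(* Two entries of one row: summing mom4_pair_relation over all pairs of rows. *)
lemma mom4_same_row_value:
  "mom4 i j i l = (1 + of_bool (j = l)) / (real CARD('n) * (real CARD('n) + 1))"
proof -
  let ?n = "real CARD('n)"
  let ?pair = "\<lambda>a b. mom4 a j b l + mom4 b j a l + 2 * cross4 a j b l"
  have sum_first: "(\<Sum>a\<in>UNIV. \<Sum>b\<in>UNIV. mom4 a j b l) = 1"
    by (subst sum.swap) (simp add: mom4_column_sum mom2_column_sum)
  have sum_second: "(\<Sum>a\<in>UNIV. \<Sum>b\<in>UNIV. mom4 b j a l) = 1"
    by (simp add: mom4_column_sum mom2_column_sum)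
  have "(\<Sum>a\<in>UNIV. \<Sum>b\<in>UNIV. ?pair a b) = 2 + 2 * of_bool (j = l)"
    using sum_first sum_second cross4_double_sum[of j l]
    by (simp add: sum.distrib sum_distrib_left[symmetric])
  moreover have "(\<Sum>a\<in>UNIV. \<Sum>b\<in>UNIV. ?pair a b) = 2 * (mom4 i j i l * (?n * (?n + 1)))"
  proof -
    have "(\<Sum>b\<in>UNIV. (1 + of_bool (a = b)) :: real) = ?n + 1" for a :: 'n
      by (simp add: sum.distrib)
    thus ?thesis
      by (simp only: mom4_pair_relation[where i = i] sum_distrib_left[symmetric] sum_constant)
  qed
  ultimately have "mom4 i j i l * (?n * (?n + 1)) = 1 + of_bool (j = l)"
    by simp
  moreover have "?n * (?n + 1) \<noteq> 0" by simp
  ultimately show ?thesis by (simp add: eq_divide_eq)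
qed

lemma mom4_same_column_value:
  assumes "i \<noteq> k"
  shows "mom4 i j k j = 1 / (real CARD('n) * (real CARD('n) + 1))"
proof -
  have "4 * mom4 i j k j = 2 * mom4 i j i j"
    using mom4_pair_relation[of i j k j i] assms mom4_swap[of k j i j] cross4_same_column[of i j k]
    by simp
  thus ?thesis using mom4_same_row_value[of i j j] by simp
qed

(* Two entries in different rows and columns: by mom4_row_indep all rows other than k
   contribute equally to the column sum over the first row index. *)
lemma mom4_generic_value:
  assumes "i \<noteq> k" "j \<noteq> l"
  shows "mom4 i j k l = 1 / ((real CARD('n))\<^sup>2 - 1)"
proof -
  let ?n = "real CARD('n)"
  have "card {i, k} \<le> CARD('n)" by (rule card_mono) auto
  hence n2: "?n \<ge> 2" using assms(1) by simp
  have other_rows: "mom4 x j k l = mom4 i j k l" if "x \<noteq> k" for x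
    using mom4_row_indep[of x i k j l] that assms(1) by (cases "x = i") auto
  have "mom2 k l = mom4 k j k l + (\<Sum>x\<in>UNIV-{k}. mom4 x j k l)"
    using mom4_column_sum[of j k l] sum.remove[of UNIV k "\<lambda>x. mom4 x j k l"] by simp
  also have "(\<Sum>x\<in>UNIV-{k}. mom4 x j k l) = (?n - 1) * mom4 i j k l"
    using other_rows n2 by (simp add: card_Diff_singleton of_nat_diff)
  finally have "1 / ?n = 1 / (?n * (?n + 1)) + (?n - 1) * mom4 i j k l"
    using mom2_value mom4_same_row_value[of k j l] assms(2) by simp
  moreover have "?n\<^sup>2 - 1 = (?n - 1) * (?n + 1)"
    by (simp add: power2_eq_square algebra_simps)
  moreover have "?n - 1 > 0" "?n > 0" using n2 by auto
  ultimately show ?thesis by (simp add: divide_simps) (simp add: algebra_simps)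
qed

lemma mom4_value:
  assumes "CARD('n) \<ge> 2"
  shows "mom4 i j k l = (1 + of_bool (i = k) * of_bool (j = l)) / ((real CARD('n))\<^sup>2 - 1)
    - (of_bool (i = k) + of_bool (j = l)) / (real CARD('n) * ((real CARD('n))\<^sup>2 - 1))"
proof -
  let ?n = "real CARD('n)"
  have square: "?n\<^sup>2 - 1 = (?n - 1) * (?n + 1)"
    by (simp add: power2_eq_square algebra_simps)
  have positive: "?n - 1 > 0" "?n > 0" using assms by auto
  show ?thesis
  proof (cases "i = k"; cases "j = l")
    assume "i = k" "j = l"
    hence moment: "mom4 i j k l = 2 / (?n * (?n + 1))"
      using mom4_same_row_value[of i j j] by simp
    show ?thesis
      using \<open>i = k\<close> \<open>j = l\<close> positive unfolding moment square
      by (simp add: divide_simps)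
  next
    assume "i = k" "j \<noteq> l"
    hence moment: "mom4 i j k l = 1 / (?n * (?n + 1))"
      using mom4_same_row_value[of i j l] by simp
    show ?thesis
      using \<open>i = k\<close> \<open>j \<noteq> l\<close> positive unfolding moment square
      by (simp add: divide_simps)
  next
    assume "i \<noteq> k" "j = l"
    hence moment: "mom4 i j k l = 1 / (?n * (?n + 1))"
      using mom4_same_column_value[of i k j] by simp
    show ?thesis
      using \<open>i \<noteq> k\<close> \<open>j = l\<close> positive unfolding moment square
      by (simp add: divide_simps)
  next
    assume "i \<noteq> k" "j \<noteq> l"
    thus ?thesis using mom4_generic_value[of i k j l] by simp
  qed
qed

end

section \<open>Index blocks: the first p indices of the linearly ordered index type\<close>

lemma idx_strict_mono:
  fixes i i' :: "'n::{finite,linorder}"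
  assumes "i < i'"
  shows "idx i < idx i'"
  unfolding idx_def by (rule psubset_card_mono) (use assms in auto)

lemma inj_idx: "inj (idx :: 'n::{finite,linorder} \<Rightarrow> nat)"
proof (rule injI)
  fix x y :: 'n
  assume "idx x = idx y"
  thus "x = y" using idx_strict_mono[of x y] idx_strict_mono[of y x]
    by (cases x y rule: linorder_cases) auto
qed

lemma range_idx: "range (idx :: 'n::{finite,linorder} \<Rightarrow> nat) = {..<CARD('n)}"
proof (rule card_subset_eq)
  have "idx i < CARD('n)" for i :: 'n
    unfolding idx_def by (rule psubset_card_mono) auto
  thus "range (idx :: 'n \<Rightarrow> nat) \<subseteq> {..<CARD('n)}" by auto
  show "card (range (idx :: 'n \<Rightarrow> nat)) = card {..<CARD('n)}"
    using card_image[OF inj_idx] by simp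
qed simp

lemma card_idx_block:
  assumes "p \<le> CARD('n::{finite,linorder})"
  shows "card {i::'n. idx i < p} = p"
proof -
  have "{i::'n. idx i < p} = idx -` {..<p}" by auto
  also have "card \<dots> = card {..<p}"
    using assms by (intro card_vimage_inj inj_idx) (auto simp: range_idx)
  finally show ?thesis by simp
qed

lemma card_idx_block_inter:
  assumes "a \<le> CARD('n::{finite,linorder})" "b \<le> CARD('n)"
  shows "card ({i::'n. idx i < a} \<inter> {i. idx i < b}) = min a b"
proof -
  have "{i::'n. idx i < a} \<inter> {i. idx i < b} = {i. idx i < min a b}" by auto
  moreover have "card {i::'n. idx i < min a b} = min a b"
    using assms by (intro card_idx_block) simp
  ultimately show ?thesis by (simp only:)
qed

lemma sum_index_coincidence:
  fixes f :: "bool \<Rightarrow> real"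
  assumes "finite I" "finite I'"
  shows "(\<Sum>i\<in>I. \<Sum>k\<in>I'. f (i = k))
    = real (card (I \<inter> I')) * f True + (real (card I) * real (card I') - real (card (I \<inter> I'))) * f False"
proof -
  have split: "f (i = k) = f False + of_bool (i = k) * (f True - f False)" for i k
    by auto
  have "(\<Sum>i\<in>I. \<Sum>k\<in>I'. f (i = k))
      = real (card I) * real (card I') * f False + (\<Sum>i\<in>I. of_bool (i \<in> I')) * (f True - f False)"
    unfolding split using assms(2)
    by (simp add: sum.distrib sum_distrib_right[symmetric] of_bool_def)
  also have "(\<Sum>i\<in>I. of_bool (i \<in> I') :: real) = real (card (I \<inter> I'))"
    using assms(1) by (simp add: of_bool_def sum.inter_restrict[symmetric])
  finally show ?thesis by (simp add: algebra_simps)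
qed

section \<open>The covariance of two block sums\<close>

lemma (in prob_space) covariance_eq:
  assumes "integrable M X" "integrable M Y" "integrable M (\<lambda>x. X x * Y x)"
  shows "covariance M X Y = expectation (\<lambda>x. X x * Y x) - expectation X * expectation Y"
proof -
  have "covariance M X Y = expectation (\<lambda>x. X x * Y x - expectation Y * X x - expectation X * Y x
      + expectation X * expectation Y)"
    unfolding covariance_def by (simp add: algebra_simps)
  also have "\<dots> = expectation (\<lambda>x. X x * Y x) - expectation X * expectation Y"
    using assms by (simp add: prob_space)
  finally show ?thesis .
qed

lemma integrable_T_block:
  fixes M :: "(complex^('n::{finite,linorder})^('n::{finite,linorder})) measure"
  assumes "haar_unitary M"
  shows "integrable M (T_block a b)"
proof -
  interpret haar_space M by (rule haar_space.intro[OF assms])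
  show ?thesis unfolding T_block_def by simp
qed

(* E T_{a,b} = a b / n, since every entry has second moment 1/n. *)
lemma expectation_T_block:
  fixes M :: "(complex^('n::{finite,linorder})^('n::{finite,linorder})) measure"
  assumes "haar_unitary M" "a \<le> CARD('n)" "b \<le> CARD('n)"
  shows "integral\<^sup>L M (T_block a b) = real a * real b / real CARD('n)"
proof -
  interpret haar_space M by (rule haar_space.intro[OF assms(1)])
  have "integral\<^sup>L M (T_block a b) = (\<Sum>i\<in>{i::'n. idx i < a}. \<Sum>j\<in>{j::'n. idx j < b}. mom2 i j)"
    unfolding T_block_def mom2_def by simp
  also have "\<dots> = real a * real b / real CARD('n)"
    using card_idx_block[OF assms(2)] card_idx_block[OF assms(3)] by (simp add: mom2_value)
  finally show ?thesis .
qed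

lemma expectation_T_block_product:
  fixes M :: "(complex^('n::{finite,linorder})^('n::{finite,linorder})) measure"
  assumes "haar_unitary M"
  shows "integrable M (\<lambda>U. T_block p q U * T_block p' q' U)"
    and "integral\<^sup>L M (\<lambda>U. T_block p q U * T_block p' q' U) =
      (\<Sum>i\<in>{i::'n. idx i < p}. \<Sum>k\<in>{k. idx k < p'}. \<Sum>j\<in>{j::'n. idx j < q}. \<Sum>l\<in>{l. idx l < q'}.
        haar_space.mom4 M i j k l)"
proof -
  interpret haar_space M by (rule haar_space.intro[OF assms])
  have product: "T_block p q U * T_block p' q' U = (\<Sum>i\<in>{i::'n. idx i < p}. \<Sum>k\<in>{k. idx k < p'}.
      \<Sum>j\<in>{j::'n. idx j < q}. \<Sum>l\<in>{l. idx l < q'}. (cmod (U$i$j))\<^sup>2 * (cmod (U$k$l))\<^sup>2)" for U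
    by (simp add: T_block_def sum_product)
  show "integrable M (\<lambda>U. T_block p q U * T_block p' q' U)"
    unfolding product by simp
  show "integral\<^sup>L M (\<lambda>U. T_block p q U * T_block p' q' U) =
      (\<Sum>i\<in>{i::'n. idx i < p}. \<Sum>k\<in>{k. idx k < p'}. \<Sum>j\<in>{j::'n. idx j < q}. \<Sum>l\<in>{l. idx l < q'}.
        mom4 i j k l)"
    unfolding product mom4_def by simp
qed

(* Summing the fourth moments over the blocks; the weights depend only on the coincidences
   i = k and j = l, whose numbers are min p p' and min q q'. *)
lemma covariance_T_block:
  fixes M :: "(complex^('n::{finite,linorder})^('n::{finite,linorder})) measure"
  assumes haar: "haar_unitary M" and n2: "CARD('n) \<ge> 2"
    and bounds: "p \<le> CARD('n)" "q \<le> CARD('n)" "p' \<le> CARD('n)" "q' \<le> CARD('n)"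
  shows "covariance M (T_block p q) (T_block p' q') = cov_formula CARD('n) p q p' q'"
proof -
  interpret haar_space M by (rule haar_space.intro[OF haar])
  interpret prob_space M by (rule prob_space_M)
  let ?n = "real CARD('n)"
  let ?I = "{i::'n. idx i < p}" and ?I' = "{i::'n. idx i < p'}"
  let ?J = "{j::'n. idx j < q}" and ?J' = "{j::'n. idx j < q'}"
  define weight :: "bool \<Rightarrow> bool \<Rightarrow> real" where
    "weight c d = (1 + of_bool c * of_bool d) / (?n\<^sup>2 - 1) - (of_bool c + of_bool d) / (?n * (?n\<^sup>2 - 1))"
    for c d
  define column_sum :: "bool \<Rightarrow> real" where
    "column_sum c = real (min q q') * weight c True + (real q * real q' - real (min q q')) * weight c False"
    for c
  have "integral\<^sup>L M (\<lambda>U. T_block p q U * T_block p' q' U)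
      = (\<Sum>i\<in>?I. \<Sum>k\<in>?I'. \<Sum>j\<in>?J. \<Sum>l\<in>?J'. weight (i = k) (j = l))"
    unfolding expectation_T_block_product(2)[OF haar] weight_def
    by (intro sum.cong refl) (rule mom4_value[OF n2])
  also have "\<dots> = (\<Sum>i\<in>?I. \<Sum>k\<in>?I'. column_sum (i = k))"
    by (simp add: column_sum_def sum_index_coincidence card_idx_block card_idx_block_inter bounds)
  also have "\<dots> = real (min p p') * column_sum True + (real p * real p' - real (min p p')) * column_sum False"
    by (simp add: sum_index_coincidence card_idx_block card_idx_block_inter bounds)
  finally have "covariance M (T_block p q) (T_block p' q') = \<dots>
      - real p * real q / ?n * (real p' * real q' / ?n)"
    using covariance_eq[OF integrable_T_block[OF haar] integrable_T_block[OF haar]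
        expectation_T_block_product(1)[OF haar]]
    by (simp add: expectation_T_block[OF haar] bounds)
  also have "\<dots> = cov_formula CARD('n) p q p' q'"
  proof -
    have "?n\<^sup>2 - 1 = (?n - 1) * (?n + 1)" by (simp add: power2_eq_square algebra_simps)
    moreover have "?n - 1 > 0" using n2 by simp
    ultimately show ?thesis
      by (simp add: column_sum_def weight_def cov_formula_def divide_simps) (simp add: algebra_simps)
  qed
  finally show ?thesis .
qed

section \<open>Asymptotics\<close>

lemma cov_formula_factor:
  assumes "n \<ge> 2"
  shows "cov_formula n p q p' q' = (real n)\<^sup>2 / ((real n)\<^sup>2 - 1) *
    ((min (real p / real n) (real p' / real n) - real p / real n * (real p' / real n)) *
     (min (real q / real n) (real q' / real n) - real q / real n * (real q' / real n)))"
proof -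
  have "real n > 0" using assms by simp
  hence min_div: "min (real a / real n) (real b / real n) = real (min a b) / real n" for a b
    by (simp add: min_def divide_le_cancel)
  have "(real n)\<^sup>2 - 1 = (real n - 1) * (real n + 1)" by (simp add: power2_eq_square algebra_simps)
  moreover have "real n - 1 > 0" using assms by simp
  ultimately show ?thesis
    unfolding min_div cov_formula_def by (simp add: divide_simps) (simp add: algebra_simps)
qed

lemma cov_formula_limit:
  fixes P Q P' Q' :: "nat \<Rightarrow> nat"
  assumes "(\<lambda>n. real (P n) / real n) \<longlonglongrightarrow> s" "(\<lambda>n. real (Q n) / real n) \<longlonglongrightarrow> t"
    and "(\<lambda>n. real (P' n) / real n) \<longlonglongrightarrow> s'" "(\<lambda>n. real (Q' n) / real n) \<longlonglongrightarrow> t'"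
  shows "(\<lambda>n. cov_formula n (P n) (Q n) (P' n) (Q' n)) \<longlonglongrightarrow> (min s s' - s * s') * (min t t' - t * t')"
proof -
  have "(\<lambda>n. (real n)\<^sup>2 / ((real n)\<^sup>2 - 1)) \<longlonglongrightarrow> 1" by real_asymp
  hence "(\<lambda>n. (real n)\<^sup>2 / ((real n)\<^sup>2 - 1) *
      ((min (real (P n) / real n) (real (P' n) / real n) - real (P n) / real n * (real (P' n) / real n)) *
       (min (real (Q n) / real n) (real (Q' n) / real n) - real (Q n) / real n * (real (Q' n) / real n))))
      \<longlonglongrightarrow> 1 * ((min s s' - s * s') * (min t t' - t * t'))"
    by (intro tendsto_intros assms)
  moreover have "eventually (\<lambda>n. (real n)\<^sup>2 / ((real n)\<^sup>2 - 1) *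
      ((min (real (P n) / real n) (real (P' n) / real n) - real (P n) / real n * (real (P' n) / real n)) *
       (min (real (Q n) / real n) (real (Q' n) / real n) - real (Q n) / real n * (real (Q' n) / real n)))
      = cov_formula n (P n) (Q n) (P' n) (Q' n)) sequentially"
    by (rule eventually_sequentiallyI[of 2]) (simp add: cov_formula_factor)
  ultimately show ?thesis by (simp add: tendsto_cong)
qed

theorem mainTheorem3:
  fixes M :: "(complex^('n::{finite,linorder})^('n::{finite,linorder})) measure"
    and p q p' q' :: nat
  assumes haar: "haar_unitary M"
    and n2: "CARD('n) \<ge> 2"
    and bounds: "1 \<le> p" "p \<le> CARD('n)" "1 \<le> q" "q \<le> CARD('n)"
                "1 \<le> p'" "p' \<le> CARD('n)" "1 \<le> q'" "q' \<le> CARD('n)"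
  shows "covariance M (T_block p q) (T_block p' q') = cov_formula CARD('n) p q p' q'
    \<and> (\<forall>(P::nat \<Rightarrow> nat) (Q::nat \<Rightarrow> nat) (P'::nat \<Rightarrow> nat) (Q'::nat \<Rightarrow> nat) (s::real) t s' t'.
         (\<forall>n\<ge>2. 1 \<le> P n \<and> P n \<le> n \<and> 1 \<le> Q n \<and> Q n \<le> n \<and>
              1 \<le> P' n \<and> P' n \<le> n \<and> 1 \<le> Q' n \<and> Q' n \<le> n) \<and>
         (\<lambda>n. real (P n) / real n) \<longlonglongrightarrow> s \<and>
         (\<lambda>n. real (Q n) / real n) \<longlonglongrightarrow> t \<and>
         (\<lambda>n. real (P' n) / real n) \<longlonglongrightarrow> s' \<and>
         (\<lambda>n. real (Q' n) / real n) \<longlonglongrightarrow> t'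
       \<longrightarrow> (\<lambda>n. cov_formula n (P n) (Q n) (P' n) (Q' n))
             \<longlonglongrightarrow> (min s s' - s * s') * (min t t' - t * t'))"
  using covariance_T_block[OF haar n2 bounds(2,4,6,8)] cov_formula_limit by blast

end
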